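(* Assume (A3) below. For any $\omega$ in the interior of the simplex $\Delta^{L-1}$, the diagonal matrix $W=\mathrm{diag}(\omega_1/\gamma_1^2,\dots,\omega_L/\gamma_L^2)$ is positive definite and satisfies $\lambda(W)=\omega$. For any $\omega\in\Delta^{L-1}$ (including the boundary), there exists a positive definite $W$ with $\lambda(W)=\omega$.
   Context: $D_i\in\{0,1\}$ is a treatment and $\mathbf Z_i=(Z_{1i},\dots,Z_{Li})'\in\{0,1\}^L$, $L\ge2$, are binary instruments. $p_\ell=P(Z_{\ell i}=1)$, $\pi_\ell=\mathbb E[D_i\mid Z_{\ell i}=1]-\mathbb E[D_i\mid Z_{\ell i}=0]$, $\gamma_\ell=\mathrm{Cov}(D_i,Z_{\ell i})=\pi_\ell p_\ell(1-p_\ell)$, $\boldsymbol\gamma=(\gamma_1,\dots,\gamma_L)'$, $\Sigma_Z=\mathrm{Var}(\mathbf Z_i)$. For a positive definite $W$, $\lambda(W)=(\lambda_1(W),\dots,\lambda_L(W))$ with $\lambda_\ell(W)=\gamma_\ell[W\boldsymbol\gamma]_\ell/(\boldsymbol\gamma'W\boldsymbol\gamma)$. $\Delta^{L-1}=\{\omega\in\mathbb R^L:\omega_\ell\ge0,\ \sum_\ell\omega_\ell=1\}$. Assumption (A3): $p_\ell>0$ and $\pi_\ell>0$ for all $\ell$, and $\Sigma_Z$ is positive definite. *)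

theory Defs
  imports "HOL-Probability.Probability"
begin

text \<open>Instruments are indexed by a finite type 'n (L = CARD('n)); vectors are real^'n,
  matrices real^'n^'n. All population moments are taken w.r.t. a probability space M.\<close>

definition covar :: "'a measure \<Rightarrow> ('a \<Rightarrow> real) \<Rightarrow> ('a \<Rightarrow> real) \<Rightarrow> real" where
  "covar M X Y = (\<integral>x. X x * Y x \<partial>M) - (\<integral>x. X x \<partial>M) * (\<integral>x. Y x \<partial>M)"

definition pZ :: "'a measure \<Rightarrow> ('a \<Rightarrow> real^'n) \<Rightarrow> 'n \<Rightarrow> real" where
  "pZ M Z l = measure M {x \<in> space M. Z x $ l = 1}"

definition condE :: "'a measure \<Rightarrow> ('a \<Rightarrow> real) \<Rightarrow> ('a \<Rightarrow> real^'n) \<Rightarrow> 'n \<Rightarrow> real \<Rightarrow> real" where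
  "condE M D Z l v =
     (\<integral>x. D x * indicator {y \<in> space M. Z y $ l = v} x \<partial>M) / measure M {y \<in> space M. Z y $ l = v}"

definition piZ :: "'a measure \<Rightarrow> ('a \<Rightarrow> real) \<Rightarrow> ('a \<Rightarrow> real^'n) \<Rightarrow> 'n \<Rightarrow> real" where
  "piZ M D Z l = condE M D Z l 1 - condE M D Z l 0"

definition gammaZ :: "'a measure \<Rightarrow> ('a \<Rightarrow> real) \<Rightarrow> ('a \<Rightarrow> real^'n) \<Rightarrow> real^'n" where
  "gammaZ M D Z = (\<chi> l. covar M D (\<lambda>x. Z x $ l))"

definition SigmaZ :: "'a measure \<Rightarrow> ('a \<Rightarrow> real^'n) \<Rightarrow> real^'n^'n" where
  "SigmaZ M Z = (\<chi> j k. covar M (\<lambda>x. Z x $ j) (\<lambda>x. Z x $ k))"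

definition pos_def :: "real^'n^'n \<Rightarrow> bool" where
  "pos_def W \<longleftrightarrow> transpose W = W \<and> (\<forall>x. x \<noteq> 0 \<longrightarrow> x \<bullet> (W *v x) > 0)"

definition lam :: "real^'n^'n \<Rightarrow> real^'n \<Rightarrow> real^'n" where
  "lam W g = (\<chi> l. g $ l * (W *v g) $ l / (g \<bullet> (W *v g)))"

definition std_simplex :: "(real^'n) set" where
  "std_simplex = {w. (\<forall>l. w $ l \<ge> 0) \<and> (\<Sum>l\<in>UNIV. w $ l) = 1}"

definition open_simplex :: "(real^'n) set" where
  "open_simplex = {w. (\<forall>l. w $ l > 0) \<and> (\<Sum>l\<in>UNIV. w $ l) = 1}"

definition diagW :: "real^'n \<Rightarrow> real^'n \<Rightarrow> real^'n^'n" where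
  "diagW w g = (\<chi> i j. if i = j then w $ i / (g $ i)\<^sup>2 else 0)"

end

theory Submission
  imports Defs
begin

text \<open>For a binary instrument \<open>\<gamma>\<^sub>l = \<pi>\<^sub>l p\<^sub>l (1 - p\<^sub>l)\<close> and \<open>(\<Sigma>\<^sub>Z)\<^sub>l\<^sub>l = p\<^sub>l (1 - p\<^sub>l)\<close>, so (A3) makes every
  \<open>\<gamma>\<^sub>l\<close> positive. With all \<open>\<gamma>\<^sub>l \<noteq> 0\<close>, the diagonal weight \<open>W = diag(\<omega>\<^sub>l / \<gamma>\<^sub>l\<^sup>2)\<close> gives
  \<open>W\<gamma> = (\<omega>\<^sub>l / \<gamma>\<^sub>l)\<^sub>l\<close> and \<open>\<gamma>'W\<gamma> = \<Sum>\<^sub>l \<omega>\<^sub>l = 1\<close>, hence \<open>\<lambda>(W) = \<omega>\<close>; it is positive definite iff every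
  \<open>\<omega>\<^sub>l > 0\<close>. On the boundary of the simplex one replaces it by \<open>W = v v' + (I - \<gamma>\<gamma>'/\<gamma>'\<gamma>)\<close> with
  \<open>v = (\<omega>\<^sub>l / \<gamma>\<^sub>l)\<^sub>l\<close>: again \<open>W\<gamma> = v\<close> because \<open>v'\<gamma> = 1\<close>, and \<open>x'Wx = (v'x)\<^sup>2 + |x - P\<^sub>\<gamma>x|\<^sup>2\<close>
  vanishes only if \<open>x\<close> is a multiple of \<open>\<gamma>\<close> orthogonal to \<open>v\<close>, i.e. \<open>x = 0\<close>.\<close>

lemma pos_def_diag_pos: "pos_def (S::real^'n^'n) \<Longrightarrow> S $ l $ l > 0"
  unfolding pos_def_def
  by (drule conjunct2, drule spec[of _ "axis l 1"])
     (simp add: matrix_vector_mult_basis inner_axis' column_def)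

lemma diagW_mult: "diagW w g *v x = (\<chi> i. w $ i / (g $ i)\<^sup>2 * x $ i)"
  by (simp add: vec_eq_iff diagW_def matrix_vector_mult_def if_distrib if_distribR sum.delta cong: if_cong)

lemma pos_def_diagW:
  assumes "\<forall>l. g $ l \<noteq> 0" and "\<forall>l. w $ l > 0"
  shows "pos_def (diagW w g)"
proof -
  have "x \<bullet> (diagW w g *v x) > 0" if "x \<noteq> 0" for x
  proof -
    obtain i where "x $ i \<noteq> 0" using \<open>x \<noteq> 0\<close> by (auto simp: vec_eq_iff)
    have "x \<bullet> (diagW w g *v x) = (\<Sum>j\<in>UNIV. w $ j / (g $ j)\<^sup>2 * (x $ j)\<^sup>2)"
      by (simp add: diagW_mult inner_vec_def power2_eq_square mult_ac)
    also have "\<dots> > 0"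
      using \<open>x $ i \<noteq> 0\<close> assms
      by (intro sum_pos2[of UNIV i]) (auto intro!: divide_nonneg_pos simp: less_imp_le)
    finally show ?thesis .
  qed
  moreover have "transpose (diagW w g) = diagW w g"
    by (simp add: vec_eq_iff diagW_def transpose_def)
  ultimately show ?thesis by (simp add: pos_def_def)
qed

lemma lam_diagW:
  assumes g: "\<forall>l. g $ l \<noteq> 0" and "(\<Sum>l\<in>UNIV. w $ l) = 1"
  shows "lam (diagW w g) g = w"
proof -
  have Wg: "diagW w g *v g = (\<chi> l. w $ l / g $ l)"
    using g by (simp add: diagW_mult vec_eq_iff power2_eq_square)
  have "g \<bullet> (diagW w g *v g) = 1"
    using assms by (simp add: Wg inner_vec_def)
  then show ?thesis
    using g by (simp add: lam_def Wg vec_eq_iff)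
qed

definition perp_plus_outer :: "real^'n \<Rightarrow> real^'n \<Rightarrow> real^'n^'n" where
  "perp_plus_outer g v = (\<chi> i j. v $ i * v $ j + of_bool (i = j) - g $ i * g $ j / (g \<bullet> g))"

lemma perp_plus_outer_mult:
  "perp_plus_outer g v *v x = (v \<bullet> x) *\<^sub>R v + x - ((g \<bullet> x) / (g \<bullet> g)) *\<^sub>R g"
  by (simp add: vec_eq_iff perp_plus_outer_def matrix_vector_mult_def inner_vec_def ring_distribs
      sum.distrib sum_subtractf sum_distrib_left sum_divide_distrib mult_ac)

lemma pos_def_perp_plus_outer:
  assumes vg: "v \<bullet> g \<noteq> 0"
  shows "pos_def (perp_plus_outer g v)"
proof -
  let ?W = "perp_plus_outer g v"
  have gg: "g \<bullet> g > 0" using vg by auto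
  have "x \<bullet> (?W *v x) > 0" if "x \<noteq> 0" for x
  proof -
    define t where "t = (g \<bullet> x) / (g \<bullet> g)"
    define y where "y = x - t *\<^sub>R g"
    have "x \<bullet> (?W *v x) = (v \<bullet> x)\<^sup>2 + y \<bullet> y"
      using gg by (simp add: perp_plus_outer_mult y_def t_def inner_diff_left inner_diff_right
          inner_add_right inner_commute power2_eq_square field_simps)
    moreover have "v \<bullet> x \<noteq> 0 \<or> y \<noteq> 0"
    proof (rule ccontr)
      assume "\<not> (v \<bullet> x \<noteq> 0 \<or> y \<noteq> 0)"
      then have "x = t *\<^sub>R g" and "t * (v \<bullet> g) = 0"
        by (auto simp: y_def)
      then show False using vg \<open>x \<noteq> 0\<close> by simp
    qed
    ultimately show ?thesis
      by (auto intro: add_pos_nonneg add_nonneg_pos)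
  qed
  moreover have "transpose ?W = ?W"
    by (simp add: vec_eq_iff perp_plus_outer_def transpose_def mult.commute)
  ultimately show ?thesis by (simp add: pos_def_def)
qed

lemma lam_perp_plus_outer:
  assumes "v \<bullet> g = 1"
  shows "lam (perp_plus_outer g v) g = (\<chi> l. g $ l * v $ l)"
proof -
  have "perp_plus_outer g v *v g = v"
    using assms by (simp add: perp_plus_outer_mult inner_commute)
  then show ?thesis
    using assms by (simp add: lam_def inner_commute)
qed

lemma exists_pos_def_lam_eq:
  assumes g: "\<forall>l. g $ l \<noteq> 0" and w: "(\<Sum>l\<in>UNIV. w $ l) = 1"
  shows "\<exists>W. pos_def W \<and> lam W g = w"
proof
  define v where "v = (\<chi> l. w $ l / g $ l)"
  have "v \<bullet> g = 1"
    using g w by (simp add: v_def inner_vec_def)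
  then show "pos_def (perp_plus_outer g v) \<and> lam (perp_plus_outer g v) g = w"
    using g by (simp add: pos_def_perp_plus_outer lam_perp_plus_outer v_def vec_eq_iff)
qed

context prob_space
begin

lemma nth_eq_one_event:
  fixes Z :: "'a \<Rightarrow> real^'n"
  assumes "Z \<in> borel_measurable M"
  shows "{x \<in> space M. Z x $ l = 1} \<in> events"
proof -
  have "(\<lambda>x. Z x $ l) \<in> borel_measurable M"
    using assms borel_measurable_nth measurable_compose by blast
  then show ?thesis by measurable
qed

lemma expectation_binary_nth:
  fixes Z :: "'a \<Rightarrow> real^'n"
  assumes "Z \<in> borel_measurable M" and "\<forall>x\<in>space M. Z x $ l \<in> {0, 1}"
  shows "expectation (\<lambda>x. Z x $ l) = pZ M Z l"
proof -
  have "expectation (\<lambda>x. Z x $ l) = expectation (indicator {x \<in> space M. Z x $ l = 1})"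
    using assms(2) by (intro Bochner_Integration.integral_cong) (auto simp: indicator_def)
  then show ?thesis
    by (simp add: pZ_def Int_absorb2)
qed

lemma SigmaZ_diag_binary_eq:
  fixes Z :: "'a \<Rightarrow> real^'n"
  assumes "Z \<in> borel_measurable M" and Z01: "\<forall>x\<in>space M. Z x $ l \<in> {0, 1}"
  shows "SigmaZ M Z $ l $ l = pZ M Z l * (1 - pZ M Z l)"
proof -
  have "expectation (\<lambda>x. Z x $ l * Z x $ l) = expectation (\<lambda>x. Z x $ l)"
    using Z01 by (intro Bochner_Integration.integral_cong) auto
  then show ?thesis
    using expectation_binary_nth[OF assms] by (simp add: SigmaZ_def covar_def algebra_simps)
qed

lemma gammaZ_binary_eq:
  fixes Z :: "'a \<Rightarrow> real^'n"
  assumes D: "integrable M D"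
    and Zm: "Z \<in> borel_measurable M" and Z01: "\<forall>x\<in>space M. Z x $ l \<in> {0, 1}"
    and p: "0 < pZ M Z l" "pZ M Z l < 1"
  shows "gammaZ M D Z $ l = piZ M D Z l * pZ M Z l * (1 - pZ M Z l)"
proof -
  define A where "A = {x \<in> space M. Z x $ l = 1}"
  define p where "p = pZ M Z l"
  define a where "a = expectation (\<lambda>x. D x * indicator A x)"
  define b where "b = expectation (\<lambda>x. D x * indicator (space M - A) x)"
  have A: "A \<in> events" unfolding A_def using nth_eq_one_event[OF Zm] .
  have not_A: "{x \<in> space M. Z x $ l = 0} = space M - A"
    using Z01 by (auto simp: A_def)
  have "prob A = p" by (simp add: A_def p_def pZ_def)
  then have prob_not_A: "prob (space M - A) = 1 - p"
    using A prob_compl by simp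
  have "expectation D = expectation (\<lambda>x. D x * indicator A x + D x * indicator (space M - A) x)"
    by (intro Bochner_Integration.integral_cong) (auto simp: indicator_def)
  also have "\<dots> = a + b"
    using A D by (simp add: a_def b_def integrable_real_mult_indicator)
  finally have ED: "expectation D = a + b" .
  have EDZ: "expectation (\<lambda>x. D x * Z x $ l) = a"
    using Z01 unfolding a_def A_def
    by (intro Bochner_Integration.integral_cong) (auto simp: indicator_def)
  have "piZ M D Z l = a / p - b / (1 - p)"
    using prob_not_A \<open>prob A = p\<close>
    by (simp add: piZ_def condE_def not_A a_def b_def flip: A_def)
  moreover have "gammaZ M D Z $ l = a - (a + b) * p"
    using ED EDZ expectation_binary_nth[OF Zm Z01] by (simp add: gammaZ_def covar_def p_def)
  ultimately show ?thesis
    using p by (simp add: p_def[symmetric] field_simps)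
qed

end

theorem lemma2:
  fixes M :: "'a measure" and D :: "'a \<Rightarrow> real" and Z :: "'a \<Rightarrow> real^'n"
  assumes "prob_space M"
    and "CARD('n) \<ge> 2"
    and "D \<in> borel_measurable M"
    and "Z \<in> borel_measurable M"
    and "\<forall>x\<in>space M. D x \<in> {0, 1}"
    and "\<forall>x\<in>space M. \<forall>l. Z x $ l \<in> {0, 1}"
    and "\<forall>l. pZ M Z l > 0"
    and "\<forall>l. piZ M D Z l > 0"
    and "pos_def (SigmaZ M Z)"
  shows "(\<forall>w \<in> open_simplex.
            pos_def (diagW w (gammaZ M D Z)) \<and> lam (diagW w (gammaZ M D Z)) (gammaZ M D Z) = w)
       \<and> (\<forall>w \<in> std_simplex. \<exists>W. pos_def W \<and> lam W (gammaZ M D Z) = w)"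
proof -
  interpret prob_space M by fact
  have "integrable M D"
    using assms(3,5) by (intro integrable_const_bound[where B=1] AE_I2) auto
  have "gammaZ M D Z $ l > 0" for l
  proof -
    have Z01: "\<forall>x\<in>space M. Z x $ l \<in> {0, 1}" using assms(6) by blast
    \<comment> \<open>\<open>(\<Sigma>\<^sub>Z)\<^sub>l\<^sub>l > 0\<close> already forces \<open>0 < p\<^sub>l < 1\<close>.\<close>
    have "0 < pZ M Z l * (1 - pZ M Z l)"
      using pos_def_diag_pos[OF assms(9), of l] SigmaZ_diag_binary_eq[OF assms(4) Z01] by simp
    then have "0 < pZ M Z l" "pZ M Z l < 1"
      by (auto simp: zero_less_mult_iff)
    then show ?thesis
      using gammaZ_binary_eq[OF \<open>integrable M D\<close> assms(4) Z01] assms(8) by simp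
  qed
  then have "\<forall>l. gammaZ M D Z $ l \<noteq> 0"
    by (metis less_irrefl)
  then show ?thesis
    by (auto simp: open_simplex_def std_simplex_def pos_def_diagW lam_diagW exists_pos_def_lam_eq)
qed

end
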